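(* Let $\alpha\ge\tfrac12$ and $1\le p<\infty$. There is a constant $C>0$ depending only on $\alpha$ and $p$ such that for every measurable $f$ on $\mathbb{R}_+$, $\|f\|_{p,\infty}\le C\sup_{y\in\mathbb{R}_+}\Big(\int_{\mathbb{R}_+}|f|^p\,\tau_y\mathbf{1}_{[0,1]}\,d\omega_\alpha\Big)^{1/p}.$
   Context: Fix $\alpha\geq\tfrac12$. The Bessel–Kingman hypergroup is $(\mathbb{R}_+,*_\alpha)$ with Haar measure $\omega_\alpha(dz)=z^{2\alpha+1}dz$ and, for $x,y>0$, $\varepsilon_x*_\alpha\varepsilon_y(f)=\int_{|x-y|}^{x+y}K_\alpha(x,y,z)f(z)z^{2\alpha+1}dz$ with $K_\alpha(x,y,z)=C_\Gamma\frac{[(z^2-(x-y)^2)((x+y)^2-z^2)]^{\alpha-1/2}}{(xyz)^{2\alpha}}$, $C_\Gamma=\frac{\Gamma(\alpha+1)}{\Gamma(1/2)\Gamma(\alpha+1/2)2^{2\alpha-1}}$; $\varepsilon_0$ is the identity. The translation is $\tau_yf(x)=\varepsilon_x*_\alpha\varepsilon_y(f)$ (so $\tau_0f=f$). Let $I_n=[n-1,n)$, $\omega_n=\omega_\alpha(I_n)$, and $\|f\|_{p,\infty}=\sup_{n\ge1}\big(\frac1{\omega_n}\int_{I_n}|f|^pd\omega_\alpha\big)^{1/p}$. *)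

theory Defs
  imports "HOL-Analysis.Analysis"
begin

definition omega :: "real \<Rightarrow> real measure" where
  "omega a = density lborel (\<lambda>z. indicator {0..} z * ennreal (z powr (2*a+1)))"

definition C_Gamma :: "real \<Rightarrow> real" where
  "C_Gamma a = Gamma (a+1) / (Gamma (1/2) * Gamma (a+1/2) * 2 powr (2*a-1))"

definition K :: "real \<Rightarrow> real \<Rightarrow> real \<Rightarrow> real \<Rightarrow> real" where
  "K a x y z = C_Gamma a *
     ((z^2 - (x-y)^2) * ((x+y)^2 - z^2)) powr (a - 1/2) / (x*y*z) powr (2*a)"

text \<open>Generalized translation tau_y g (x) = (eps_x * eps_y)(g); eps_0 is the identity.\<close>
definition tau :: "real \<Rightarrow> real \<Rightarrow> (real \<Rightarrow> real) \<Rightarrow> real \<Rightarrow> real" where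
  "tau a y g x =
     (if y = 0 then g x
      else if x = 0 then g y
      else (LINT z:{\<bar>x-y\<bar>..x+y}|lborel. K a x y z * g z * z powr (2*a+1)))"

definition ennroot :: "real \<Rightarrow> ennreal \<Rightarrow> ennreal" where
  "ennroot p t = (if t = top then top else ennreal (enn2real t powr (1/p)))"

definition I :: "nat \<Rightarrow> real set" where
  "I n = {real n - 1 ..< real n}"

definition norm_p_inf :: "real \<Rightarrow> real \<Rightarrow> (real \<Rightarrow> real) \<Rightarrow> ennreal" where
  "norm_p_inf a p f = (SUP n\<in>{1..}. ennroot p
      (ennreal (1 / measure (omega a) (I n)) *
       (\<integral>\<^sup>+ x\<in>I n. ennreal (\<bar>f x\<bar> powr p) \<partial>omega a)))"

end

theory Submission
  imports Defs
begin

text \<open>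
  For x in I_n (n \<ge> 2) put y = n - 1/2. The interval [|x-y|, x+y] over which the product
  kernel integrates contains [3/4, 1], and there the kernel weight K(x,y,z) z^(2\<alpha>+1) is at
  least a constant times n^(2\<alpha>-1) / n^(4\<alpha>); so \<tau>_y 1_[0,1] \<ge> c n^-(2\<alpha>+1) on I_n.
  As \<omega>_\<alpha>(I_n) \<ge> c' n^(2\<alpha>+1), a single D satisfies 1_(I_n) / \<omega>_\<alpha>(I_n) \<le> D \<tau>_y 1_[0,1]
  pointwise (for n = 1 take y = 0, where \<tau>_0 is the identity). Integrating |f|^p against
  both sides gives the estimate with C = D^(1/p).
\<close>

lemma C_Gamma_pos: "a > -1/2 \<Longrightarrow> C_Gamma a > 0"
  unfolding C_Gamma_def by (intro divide_pos_pos mult_pos_pos) auto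

lemma sets_omega [measurable_cong]: "sets (omega a) = sets borel"
  by (simp add: omega_def)

lemma ennroot_mono:
  assumes "p > 0" "s \<le> t"
  shows "ennroot p s \<le> ennroot p t"
proof (cases "t = top")
  case False
  then have "s \<noteq> top" and "enn2real s \<le> enn2real t"
    using assms(2) top.extremum_unique enn2real_mono top.not_eq_extremum by blast+
  with False assms(1) show ?thesis
    unfolding ennroot_def by (auto intro!: ennreal_leI powr_mono2)
qed (simp add: ennroot_def)

lemma ennroot_cmult:
  assumes "p > 0" "D > 0"
  shows "ennroot p (ennreal D * t) = ennreal (D powr (1/p)) * ennroot p t"
proof (cases "t = top")
  case False
  then obtain r where r: "t = ennreal r" "r \<ge> 0" by (cases t) auto
  then have "ennroot p (ennreal D * t) = ennreal ((D * r) powr (1/p))"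
    using assms by (simp add: ennroot_def ennreal_mult[symmetric])
  with r assms show ?thesis
    by (simp add: ennroot_def powr_mult ennreal_mult)
qed (use assms in \<open>simp add: ennroot_def ennreal_mult_top\<close>)

lemma emeasure_omega_Ico_bounds:
  assumes a: "a > -1/2" and l: "0 \<le> l" "l \<le> u"
  shows "ennreal (l powr (2*a+1) * (u - l)) \<le> emeasure (omega a) {l..<u}"
    and "emeasure (omega a) {l..<u} \<le> ennreal (u powr (2*a+1) * (u - l))"
proof -
  have omega_Ico: "emeasure (omega a) {l..<u} = (\<integral>\<^sup>+z. ennreal (z powr (2*a+1)) * indicator {l..<u} z \<partial>lborel)"
    unfolding omega_def using l
    by (subst emeasure_density) (auto intro!: nn_integral_cong simp: indicator_def)
  have const: "ennreal (c * (u - l)) = (\<integral>\<^sup>+z. ennreal c * indicator {l..<u} z \<partial>lborel)" if "c \<ge> 0" for c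
    using that l by (simp add: nn_integral_cmult_indicator ennreal_mult)
  show "ennreal (l powr (2*a+1) * (u - l)) \<le> emeasure (omega a) {l..<u}"
    unfolding omega_Ico const[OF powr_ge_zero] using a l
    by (intro nn_integral_mono) (auto simp: indicator_def intro!: ennreal_leI powr_mono2)
  show "emeasure (omega a) {l..<u} \<le> ennreal (u powr (2*a+1) * (u - l))"
    unfolding omega_Ico const[OF powr_ge_zero] using a l
    by (intro nn_integral_mono) (auto simp: indicator_def intro!: ennreal_leI powr_mono2)
qed

lemma K_times_weight:
  assumes "x > 0" "y > 0" "z > 0"
  shows "K a x y z * z powr (2*a+1)
    = C_Gamma a * ((z^2 - (x-y)^2) * ((x+y)^2 - z^2)) powr (a - 1/2) / (x*y) powr (2*a) * z"
proof -
  have "(x*y*z) powr (2*a) = (x*y) powr (2*a) * z powr (2*a)" and "z powr (2*a+1) = z powr (2*a) * z"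
    using assms by (simp_all add: powr_mult powr_add)
  with assms show ?thesis
    unfolding K_def by (simp add: field_simps)
qed

lemma K_nonneg: "a > -1/2 \<Longrightarrow> 0 \<le> K a x y z"
  unfolding K_def using C_Gamma_pos[of a] by simp

lemma kernel_product_bounds:
  fixes x y z :: real
  assumes "\<bar>x-y\<bar> \<le> z" "z \<le> x+y"
  shows "0 \<le> (z^2 - (x-y)^2) * ((x+y)^2 - z^2)" "(z^2 - (x-y)^2) * ((x+y)^2 - z^2) \<le> (x+y)^4"
proof -
  have sq: "(x-y)^2 \<le> z^2" "z^2 \<le> (x+y)^2"
    using power_mono[OF assms(1) abs_ge_zero, of 2] power_mono[OF assms(2), of 2] assms by auto
  moreover have "z^2 - (x-y)^2 \<le> (x+y)^2"
    using sq zero_le_power2[of "x-y"] by linarith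
  ultimately show "0 \<le> (z^2 - (x-y)^2) * ((x+y)^2 - z^2)" "(z^2 - (x-y)^2) * ((x+y)^2 - z^2) \<le> (x+y)^4"
    using mult_mono[of "z^2 - (x-y)^2" "(x+y)^2" "(x+y)^2 - z^2" "(x+y)^2"]
    by (simp_all add: power4_eq_xxxx power2_eq_square)
qed

lemma tau_indicator_integrand_bound:
  assumes a: "a \<ge> 1/2" and xy: "x > 0" "y > 0" and z: "z \<in> {\<bar>x-y\<bar>..x+y}"
  shows "norm (K a x y z * indicator {0..1} z * z powr (2*a+1))
    \<le> C_Gamma a * ((x+y)^4) powr (a - 1/2) / (x*y) powr (2*a)"
proof (cases "z \<in> {0<..1}")
  case False
  then have "K a x y z * indicator {0..1} z * z powr (2*a+1) = 0"
    by (auto simp: indicator_def)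
  then show ?thesis
    unfolding \<open>_ = 0\<close> using a xy C_Gamma_pos[of a] by simp
next
  case True
  let ?B = "(z^2 - (x-y)^2) * ((x+y)^2 - z^2)"
  have "?B powr (a - 1/2) \<le> ((x+y)^4) powr (a - 1/2)"
    using kernel_product_bounds[of x y z] z a by (intro powr_mono2) auto
  then have "C_Gamma a * ?B powr (a - 1/2) / (x*y) powr (2*a) * z
      \<le> C_Gamma a * ((x+y)^4) powr (a - 1/2) / (x*y) powr (2*a) * 1"
    using True a xy C_Gamma_pos[of a] by (intro mult_mono divide_right_mono mult_left_mono) auto
  moreover have "K a x y z * indicator {0..1} z * z powr (2*a+1) = C_Gamma a * ?B powr (a - 1/2) / (x*y) powr (2*a) * z"
    using K_times_weight[OF xy, of z a] True by (simp add: indicator_def)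
  moreover have "0 \<le> C_Gamma a * ?B powr (a - 1/2) / (x*y) powr (2*a) * z"
    using True a C_Gamma_pos[of a] by simp
  ultimately show ?thesis by simp
qed

lemma kernel_product_lower:
  fixes n x z :: real
  assumes "2 \<le> n" "n - 1 \<le> x" "x \<le> n" "3/4 \<le> z" "z \<le> 1"
  shows "15/64 * n^2 \<le> (z^2 - (x - (n - 1/2))^2) * ((x + (n - 1/2))^2 - z^2)"
proof -
  have "\<bar>x - (n - 1/2)\<bar> \<le> 1/2" using assms by linarith
  then have "(x - (n - 1/2))^2 \<le> (1/2)^2"
    by (metis abs_ge_zero power2_abs power_mono)
  moreover have "(3/4)^2 \<le> z^2" using assms by (intro power_mono) auto
  ultimately have left: "5/16 \<le> z^2 - (x - (n - 1/2))^2" by (simp add: power2_eq_square)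
  have "n^2 \<le> (x + (n - 1/2))^2" "z^2 \<le> 1" "2^2 \<le> n^2"
    using assms by (intro power_mono power_le_one; simp)+
  then have right: "3/4 * n^2 \<le> (x + (n - 1/2))^2 - z^2" by simp
  show ?thesis
    using mult_mono[OF left right] left by simp
qed

lemma tau_indicator_integrand_lower:
  assumes a: "a \<ge> 1/2" and n: "n \<ge> 2" and x: "x \<in> I n" and z: "z \<in> {3/4..1}"
  shows "C_Gamma a * (15/64) powr (a - 1/2) * (3/4) * real n powr (-(2*a+1))
    \<le> K a x (real n - 1/2) z * indicator {0..1} z * z powr (2*a+1)"
proof -
  \<comment> \<open>stated for variables: on the concrete powr terms simp does not terminate\<close>
  have mult_regroup: "c * (u * v) / w * t = c * u * t * (v / w)" for c u v w t :: real
    by (simp add: divide_inverse mult_ac)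
  define y where "y = real n - 1/2"
  let ?B = "(z^2 - (x-y)^2) * ((x+y)^2 - z^2)"
  have n2: "real n \<ge> 2" using n by simp
  have xb: "real n - 1 \<le> x" "x < real n" using x by (auto simp: I_def)
  have pos: "0 < x" "0 < y" "0 < z" using xb n2 z by (auto simp: y_def)
  have "(15/64 * real n^2) powr (a - 1/2) \<le> ?B powr (a - 1/2)"
    using kernel_product_lower[OF n2 xb(1) _ , of z] xb z a unfolding y_def by (intro powr_mono2) auto
  moreover have "(15/64 * real n^2) powr (a - 1/2) = (15/64) powr (a - 1/2) * real n powr (2*a - 1)"
  proof -
    have "(15/64 * real n^2) powr (a - 1/2) = (15/64) powr (a - 1/2) * (real n powr 2) powr (a - 1/2)"
      using powr_mult[of "15/64" "real n^2" "a - 1/2"] n2 by (simp add: powr_realpow)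
    also have "(real n powr 2) powr (a - 1/2) = real n powr (2*a - 1)"
      unfolding powr_powr by (simp add: algebra_simps)
    finally show ?thesis .
  qed
  moreover have "(x*y) powr (2*a) \<le> real n powr (4*a)"
  proof -
    have "(x*y) powr (2*a) \<le> (real n * real n) powr (2*a)"
      using pos xb a by (intro powr_mono2 mult_mono) (auto simp: y_def)
    then show ?thesis using n2 by (simp add: powr_mult flip: powr_add)
  qed
  ultimately have "C_Gamma a * ((15/64) powr (a - 1/2) * real n powr (2*a - 1)) / real n powr (4*a) * (3/4)
      \<le> C_Gamma a * ?B powr (a - 1/2) / (x*y) powr (2*a) * z"
    using pos z C_Gamma_pos[of a] a by (intro mult_mono frac_le mult_left_mono) auto
  also have "\<dots> = K a x y z * indicator {0..1} z * z powr (2*a+1)"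
    using K_times_weight[OF pos, of a] z by (simp add: indicator_def)
  also have "C_Gamma a * ((15/64) powr (a - 1/2) * real n powr (2*a - 1)) / real n powr (4*a) * (3/4)
      = C_Gamma a * (15/64) powr (a - 1/2) * (3/4) * (real n powr (2*a - 1) / real n powr (4*a))"
    by (rule mult_regroup)
  also have "real n powr (2*a - 1) / real n powr (4*a) = real n powr (-(2*a+1))"
    using n2 by (simp flip: powr_diff)
  finally show ?thesis
    unfolding y_def .
qed

lemma tau_indicator_integrand_integrable:
  assumes "a \<ge> 1/2" "x > 0" "y > 0"
  shows "integrable lborel
    (\<lambda>z. indicator {\<bar>x-y\<bar>..x+y} z *\<^sub>R (K a x y z * indicator {0..1} z * z powr (2*a+1)))"
  using tau_indicator_integrand_bound[OF assms]
  by (intro integrableI_bounded_set_indicator[where B="C_Gamma a * ((x+y)^4) powr (a - 1/2) / (x*y) powr (2*a)"])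
    (auto simp: K_def emeasure_lborel_Icc_eq)

lemma tau_indicator_lower:
  assumes a: "a \<ge> 1/2"
  obtains c where "c > 0"
    and "\<And>n x. n \<ge> 2 \<Longrightarrow> x \<in> I n \<Longrightarrow> c * real n powr (-(2*a+1)) \<le> tau a (real n - 1/2) (indicator {0..1}) x"
proof
  show "C_Gamma a * (15/64) powr (a - 1/2) * (3/4) / 4 > 0"
    using C_Gamma_pos[of a] a by simp
  fix n :: nat and x assume n: "n \<ge> 2" and x: "x \<in> I n"
  define y where "y = real n - 1/2"
  define L where "L = C_Gamma a * (15/64) powr (a - 1/2) * (3/4) * real n powr (-(2*a+1))"
  let ?F = "\<lambda>z. K a x y z * indicator {0..1} z * z powr (2*a+1)"
  let ?S = "{\<bar>x-y\<bar>..x+y}"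
  have n2: "real n \<ge> 2" using n by simp
  have xb: "real n - 1 \<le> x" "x < real n" using x by (auto simp: I_def)
  moreover have "1 \<le> x" using xb n2 by linarith
  ultimately have "0 < x \<and> 0 < y \<and> \<bar>x-y\<bar> \<le> 3/4 \<and> 1 \<le> x+y"
    unfolding y_def by (auto simp: abs_if)
  then have xy: "0 < x" "0 < y" and sub: "{3/4..1} \<subseteq> ?S" by auto
  have "L / 4 = (LINT z|lborel. indicator {3/4..1::real} z *\<^sub>R L)"
    using set_integral_const[of "{3/4..1::real}" lborel L]
    by (simp add: set_lebesgue_integral_def emeasure_lborel_Icc_eq)
  also have "\<dots> \<le> (LINT z|lborel. indicator ?S z *\<^sub>R ?F z)"
  proof (rule integral_mono)
    show "integrable lborel (\<lambda>z. indicator {3/4..1::real} z *\<^sub>R L)"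
      by (intro integrableI_bounded_set_indicator[where B="\<bar>L\<bar>"]) (auto simp: emeasure_lborel_Icc_eq)
    show "integrable lborel (\<lambda>z. indicator ?S z *\<^sub>R ?F z)"
      using tau_indicator_integrand_integrable[OF a xy] .
    fix z :: real
    show "indicator {3/4..1::real} z *\<^sub>R L \<le> indicator ?S z *\<^sub>R ?F z"
      using sub tau_indicator_integrand_lower[OF a n x, of z] K_nonneg[of a x y z] a
      by (cases "z \<in> {3/4..1}") (auto simp: indicator_def L_def y_def)
  qed
  also have "\<dots> = tau a y (indicator {0..1}) x"
    using xy unfolding tau_def set_lebesgue_integral_def by simp
  finally show "C_Gamma a * (15/64) powr (a - 1/2) * (3/4) / 4 * real n powr (-(2*a+1))
      \<le> tau a (real n - 1/2) (indicator {0..1}) x"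
    unfolding L_def y_def by simp
qed

lemma inverse_measure_omega_I_le:
  assumes a: "a \<ge> 1/2" and n: "n \<ge> 1"
  shows "1 / measure (omega a) (I n) \<le> 2 powr (2*a+2) * real n powr (-(2*a+1))"
proof -
  let ?E = "2*a+1"
  have n1: "real n \<ge> 1" using n by simp
  have "emeasure (omega a) (I n) \<le> ennreal (real n powr ?E * 1)"
    using emeasure_omega_Ico_bounds(2)[of a "real n - 1" "real n"] a n1 by (simp add: I_def)
  then have finite: "emeasure (omega a) (I n) \<noteq> top"
    using neq_top_trans ennreal_neq_top by blast
  have "ennreal ((real n - 1/2) powr ?E * (1/2)) \<le> emeasure (omega a) {real n - 1/2..<real n}"
    using emeasure_omega_Ico_bounds(1)[of a "real n - 1/2" "real n"] a n1 by simp
  also have "\<dots> \<le> emeasure (omega a) (I n)"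
    by (rule emeasure_mono) (auto simp: I_def sets_omega)
  finally have "(real n - 1/2) powr ?E * (1/2) \<le> measure (omega a) (I n)"
    using finite by (simp add: emeasure_eq_ennreal_measure)
  moreover have "real n powr ?E / 2 powr (2*a+2) \<le> (real n - 1/2) powr ?E * (1/2)"
  proof -
    have "real n powr ?E / 2 powr (2*a+2) = (real n / 2) powr ?E * (1/2)"
      using powr_add[of 2 "2*a+1" 1] by (simp add: powr_divide add.commute)
    also have "\<dots> \<le> (real n - 1/2) powr ?E * (1/2)"
      using a n1 by (intro mult_right_mono powr_mono2) auto
    finally show ?thesis .
  qed
  ultimately have "real n powr ?E / 2 powr (2*a+2) \<le> measure (omega a) (I n)"
    by linarith
  moreover have "0 < real n powr ?E / 2 powr (2*a+2)"
    using n1 by simp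
  ultimately have "1 / measure (omega a) (I n) \<le> 1 / (real n powr ?E / 2 powr (2*a+2))"
    by (intro divide_left_mono mult_pos_pos) auto
  then show ?thesis
    unfolding powr_minus by (simp add: divide_inverse mult.commute)
qed

lemma translated_indicator_dominates_average:
  assumes a: "a \<ge> 1/2"
  obtains D where "D > 0"
    and "\<And>n. n \<ge> 1 \<Longrightarrow> \<exists>y\<ge>0. \<forall>x\<in>I n. 1 / measure (omega a) (I n) \<le> D * tau a y (indicator {0..1}) x"
proof -
  obtain c where c: "c > 0"
    and tau: "\<And>n x. n \<ge> 2 \<Longrightarrow> x \<in> I n \<Longrightarrow> c * real n powr (-(2*a+1)) \<le> tau a (real n - 1/2) (indicator {0..1}) x"
    using tau_indicator_lower[OF a] by blast
  define M where "M = max 1 (1/c)"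
  define D where "D = 2 powr (2*a+2) * M"
  have M: "1 \<le> M" "1 \<le> M * c"
    using c by (auto simp: M_def pos_divide_le_eq[symmetric])
  have "\<exists>y\<ge>0. \<forall>x\<in>I n. 1 / measure (omega a) (I n) \<le> D * tau a y (indicator {0..1}) x"
    if n: "n \<ge> 1" for n
  proof (cases "n = 1")
    case True
    have "1 / measure (omega a) (I n) \<le> D * tau a 0 (indicator {0..1}) x" if x: "x \<in> I n" for x
    proof -
      have "1 / measure (omega a) (I n) \<le> 2 powr (2*a+2)"
        using inverse_measure_omega_I_le[OF a n] True by simp
      also have "\<dots> \<le> D"
        using M(1) by (simp add: D_def)
      also have "D = D * tau a 0 (indicator {0..1}) x"
        using x True by (simp add: tau_def I_def)
      finally show ?thesis .
    qed
    then show ?thesis by blast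
  next
    case False
    have "1 / measure (omega a) (I n) \<le> D * tau a (real n - 1/2) (indicator {0..1}) x" if x: "x \<in> I n" for x
    proof -
      have "1 / measure (omega a) (I n) \<le> 2 powr (2*a+2) * real n powr (-(2*a+1))"
        using inverse_measure_omega_I_le[OF a n] .
      also have "\<dots> \<le> 2 powr (2*a+2) * real n powr (-(2*a+1)) * (M * c)"
        using mult_left_mono[OF M(2), of "2 powr (2*a+2) * real n powr (-(2*a+1))"] by simp
      also have "\<dots> = D * (c * real n powr (-(2*a+1)))"
        by (simp add: D_def ac_simps)
      also have "\<dots> \<le> D * tau a (real n - 1/2) (indicator {0..1}) x"
        using tau[of n x] False n x M(1) by (intro mult_left_mono) (auto simp: D_def)
      finally show ?thesis .
    qed
    then show ?thesis using n by (intro exI[of _ "real n - 1/2"]) auto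
  qed
  moreover have "D > 0" using M(1) by (simp add: D_def)
  ultimately show thesis using that by blast
qed

lemma set_nn_integral_le_weighted_nn_integral:
  fixes h g :: "'a \<Rightarrow> real"
  assumes A: "A \<in> sets M" and h: "h \<in> borel_measurable M" "\<And>x. 0 \<le> h x"
    and c: "0 \<le> c" and D: "0 < D" and dom: "\<And>x. x \<in> A \<Longrightarrow> c \<le> D * g x"
  shows "ennreal c * (\<integral>\<^sup>+x\<in>A. ennreal (h x) \<partial>M) \<le> ennreal D * (\<integral>\<^sup>+x. ennreal (h x * g x) \<partial>M)"
proof -
  have hA: "(\<lambda>x. ennreal (h x) * indicator A x) \<in> borel_measurable M"
    using A h(1) by measurable
  have "ennreal c * (\<integral>\<^sup>+x\<in>A. ennreal (h x) \<partial>M)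
      = (\<integral>\<^sup>+x. ennreal D * (ennreal (c / D) * (ennreal (h x) * indicator A x)) \<partial>M)"
    using nn_integral_cmult[OF hA, of "ennreal c"] c D
    by (simp add: mult.assoc[symmetric] ennreal_mult[symmetric])
  also have "\<dots> = ennreal D * (\<integral>\<^sup>+x. ennreal (c / D) * (ennreal (h x) * indicator A x) \<partial>M)"
    by (rule nn_integral_cmult) (use A h(1) in measurable)
  also have "\<dots> \<le> ennreal D * (\<integral>\<^sup>+x. ennreal (h x * g x) \<partial>M)"
  proof (intro mult_left_mono nn_integral_mono)
    fix x
    show "ennreal (c / D) * (ennreal (h x) * indicator A x) \<le> ennreal (h x * g x)"
    proof (cases "x \<in> A")
      case True
      then have "c / D * h x \<le> g x * h x"
        using dom[OF True] D h(2)[of x] by (intro mult_right_mono) (simp_all add: pos_divide_le_eq mult.commute)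
      then show ?thesis
        using True c D h(2)[of x] by (simp add: ennreal_mult[symmetric] mult.commute ennreal_leI)
    qed simp
  qed simp
  finally show ?thesis .
qed

lemma norm_p_inf_le_SUP_translates:
  assumes p: "p > 0" and D: "D > 0" and f: "f \<in> borel_measurable borel"
    and dom: "\<And>n. n \<ge> 1 \<Longrightarrow> \<exists>y\<ge>0. \<forall>x\<in>I n. 1 / measure (omega a) (I n) \<le> D * tau a y (indicator {0..1}) x"
  shows "norm_p_inf a p f \<le> ennreal (D powr (1/p)) *
    (SUP y\<in>{0..}. ennroot p (\<integral>\<^sup>+ x. ennreal (\<bar>f x\<bar> powr p * tau a y (indicator {0..1}) x) \<partial>omega a))"
    (is "_ \<le> _ * (SUP y\<in>{0..}. ennroot p (?R y))")
  unfolding norm_p_inf_def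
proof (rule SUP_least)
  fix n :: nat assume "n \<in> {1..}"
  then have "n \<ge> 1" by simp
  then obtain y where y: "y \<ge> 0"
    and y_dom: "\<And>x. x \<in> I n \<Longrightarrow> 1 / measure (omega a) (I n) \<le> D * tau a y (indicator {0..1}) x"
    using dom by blast
  have "ennroot p (ennreal (1 / measure (omega a) (I n)) * (\<integral>\<^sup>+x\<in>I n. ennreal (\<bar>f x\<bar> powr p) \<partial>omega a))
      \<le> ennroot p (ennreal D * ?R y)"
    using f y_dom D by (intro ennroot_mono p set_nn_integral_le_weighted_nn_integral) (auto simp: I_def)
  also have "\<dots> = ennreal (D powr (1/p)) * ennroot p (?R y)"
    by (rule ennroot_cmult[OF p D])
  also have "\<dots> \<le> ennreal (D powr (1/p)) * (SUP y\<in>{0..}. ennroot p (?R y))"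
    using y by (intro mult_left_mono SUP_upper) auto
  finally show "ennroot p (ennreal (1 / measure (omega a) (I n)) * (\<integral>\<^sup>+x\<in>I n. ennreal (\<bar>f x\<bar> powr p) \<partial>omega a))
      \<le> ennreal (D powr (1/p)) * (SUP y\<in>{0..}. ennroot p (?R y))" .
qed

theorem mainTheorem2:
  fixes a p :: real
  assumes "a \<ge> 1/2" and "1 \<le> p"
  shows "\<exists>C>0. \<forall>f :: real \<Rightarrow> real. f \<in> borel_measurable borel \<longrightarrow>
           norm_p_inf a p f \<le> ennreal C *
             (SUP y\<in>{0..}. ennroot p
                (\<integral>\<^sup>+ x. ennreal (\<bar>f x\<bar> powr p * tau a y (indicator {0..1}) x) \<partial>omega a))"
proof -
  obtain D where D: "D > 0" and dom: "\<And>n. n \<ge> 1 \<Longrightarrow>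
      \<exists>y\<ge>0. \<forall>x\<in>I n. 1 / measure (omega a) (I n) \<le> D * tau a y (indicator {0..1}) x"
    using translated_indicator_dominates_average[OF assms(1)] by blast
  have p: "p > 0" using assms(2) by simp
  show ?thesis
    using norm_p_inf_le_SUP_translates[OF p D _ dom] D by (intro exI[of _ "D powr (1/p)"]) auto
qed

end
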